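(* Let $\mathbb{H}$ be a finite-dimensional complex Hilbert space and $t\mapsto H(t)$ a continuous family of self-adjoint operators with propagator $\{U(t,s)\}$ (unitaries with $U(t,t)=I$, $U(t,r)U(r,s)=U(t,s)$, $\mathrm{i}\frac{d}{dt}U(t,s)=H(t)U(t,s)$). Let $X_0=\sum_{j=1}^n\lambda_jE_j$ be self-adjoint with distinct eigenvalues and spectral projections $E_j$, with $U(0,T)E_jU(T,0)=E_j$ for all $j$ for some $T>0$. For each $j$ let $\{\psi^{(j)}_k\}_{k=1}^{d_j}$ be an orthonormal basis of $E_j[\mathbb{H}]$, $\psi^{(j)}_k(t)=U(0,t)\psi^{(j)}_k$, $\mathbb{H}_j(t)=U(0,t)E_jU(t,0)[\mathbb{H}]$, $\tilde V_j(t)=[\tilde v^{(j)}_{mk}(t)]$ the solution of $\mathrm{i}\frac{d}{dt}\tilde V_j=C_j\tilde V_j$, $\tilde V_j(0)=I_{d_j}$, where $C_j(t)=[\langle\psi^{(j)}_m,H(t)\psi^{(j)}_k\rangle]_{m,k}$, and $\tilde\psi^{(j)}_k(t)=\sum_m\tilde v^{(j)}_{mk}(t)\psi^{(j)}_m(t)$. Let $\{\bar\psi^{(j)}_k(t)\}_{k}$ be, for each $t\in[0,T]$, an orthonormal basis of $\mathbb{H}_j(t)$, continuously differentiable in $t$, with $\bar\psi^{(j)}_k(T)=\bar\psi^{(j)}_k(0)=\psi^{(j)}_k$. Set $\tilde U(t)=\sum_j\sum_k|\tilde\psi^{(j)}_k(t)\rangle\langle\psi^{(j)}_k|$, $\bar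 U(t)=\sum_j\sum_k|\bar\psi^{(j)}_k(t)\rangle\langle\psi^{(j)}_k|$, and let $\mathbf{C}_W:[0,T]\ni t\mapsto W(t)=\Pi(\bar U(t))$, where $\Pi$ is the quotient map for the partitioned orthonormal basis $O_0=\{\psi^{(j)}_k\}$ with blocks $Q^{(j)}_0=\{\psi^{(j)}_k:1\le k\le d_j\}$. Then $t\mapsto\tilde U(t)$ is the horizontal lift of $\mathbf{C}_W$ with respect to the canonical connection $\check\Omega$; that is, $\tilde U$ is a smooth curve in $\mathcal{U}(\mathbb{H})$ with $\Pi(\tilde U(t))=W(t)$ and $\check\Omega_{\tilde U(t)}\big(\frac{d\tilde U(t)}{dt}\big)=0$ for all $t\in[0,T]$.
   Context: $\mathcal{G}$ denotes the group of unitaries block diagonal with respect to the partition $O_0=\bigcup_jQ^{(j)}_0$ (i.e. of the form $\sum_j\sum_{m,k}u^{(j)}_{mk}|\psi^{(j)}_m\rangle\langle\psi^{(j)}_k|$ with unitary blocks), $\mathcal{W}=\{U\mathcal{G}:U\in\mathcal{U}(\mathbb{H})\}$, and $\Pi(U)=U\mathcal{G}$. For $P\in\mathcal{U}(\mathbb{H})$ and $Q$ a tangent vector at $P$ (derivative at $0$ of a differentiable curve in $\mathcal{U}(\mathbb{H})$ through $P$), the canonical connection is $\check\Omega_P(Q)=\sum_{j=1}^n\sum_{m,k=1}^{d_j}\langle\psi^{(j)}_m,P^{-1}Q\psi^{(j)}_k\rangle|\psi^{(j)}_m\rangle\langle\psi^{(j)}_k|$. Inner products are linear in the second argument. *)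

theory Defs
  imports "HOL-Analysis.Analysis"
begin

text \<open>The finite-dimensional Hilbert space is modelled as complex^'n ('n finite);
operators are matrices complex^'n^'n acting by *v.\<close>

definition cinner :: "complex^'n \<Rightarrow> complex^'n \<Rightarrow> complex" where
  "cinner x y = (\<Sum>i\<in>UNIV. cnj (x$i) * y$i)"

definition adj :: "complex^'n^'n \<Rightarrow> complex^'n^'n" where
  "adj M = (\<chi> i j. cnj (M$j$i))"

definition unitary :: "complex^'n^'n \<Rightarrow> bool" where
  "unitary M \<longleftrightarrow> adj M ** M = mat 1 \<and> M ** adj M = mat 1"

definition self_adjoint :: "complex^'n^'n \<Rightarrow> bool" where
  "self_adjoint M \<longleftrightarrow> adj M = M"

definition cmscale :: "complex \<Rightarrow> complex^'n^'n \<Rightarrow> complex^'n^'n" where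
  "cmscale c M = (\<chi> i j. c * M$i$j)"

definition ketbra :: "complex^'n \<Rightarrow> complex^'n \<Rightarrow> complex^'n^'n" where
  "ketbra a b = (\<chi> i l. a$i * cnj (b$l))"

definition op_range :: "complex^'n^'n \<Rightarrow> (complex^'n) set" where
  "op_range M = {M *v y | y. True}"

definition onb_of :: "(complex^'n) set \<Rightarrow> (nat \<Rightarrow> complex^'n) \<Rightarrow> nat \<Rightarrow> bool" where
  "onb_of S v m \<longleftrightarrow>
     (\<forall>k<m. \<forall>l<m. cinner (v k) (v l) = (if k = l then 1 else 0)) \<and>
     (\<forall>k<m. v k \<in> S) \<and>
     (\<forall>x\<in>S. \<exists>c. x = (\<Sum>k<m. c k *s v k))"

text \<open>The group G of unitaries block diagonal w.r.t. the partitioned ONB psi (blocks j < n,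
block j = {psi j k | k < d j}).\<close>
definition blockG :: "nat \<Rightarrow> (nat \<Rightarrow> nat) \<Rightarrow> (nat \<Rightarrow> nat \<Rightarrow> complex^'n) \<Rightarrow> (complex^'n^'n) set" where
  "blockG n d psi =
     {(\<Sum>j<n. \<Sum>m<d j. \<Sum>k<d j. cmscale (u j m k) (ketbra (psi j m) (psi j k))) | u.
        \<forall>j<n. (\<forall>m<d j. \<forall>k<d j.
                 (\<Sum>l<d j. cnj (u j l m) * u j l k) = (if m = k then 1 else 0)) \<and>
               (\<forall>m<d j. \<forall>k<d j.
                 (\<Sum>l<d j. u j m l * cnj (u j k l)) = (if m = k then 1 else 0))}"

definition Pi_quot :: "nat \<Rightarrow> (nat \<Rightarrow> nat) \<Rightarrow> (nat \<Rightarrow> nat \<Rightarrow> complex^'n) \<Rightarrow> complex^'n^'n \<Rightarrow> (complex^'n^'n) set" where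
  "Pi_quot n d psi U = {U ** g | g. g \<in> blockG n d psi}"

definition can_conn :: "nat \<Rightarrow> (nat \<Rightarrow> nat) \<Rightarrow> (nat \<Rightarrow> nat \<Rightarrow> complex^'n) \<Rightarrow> complex^'n^'n \<Rightarrow> complex^'n^'n \<Rightarrow> complex^'n^'n" where
  "can_conn n d psi P Q =
     (\<Sum>j<n. \<Sum>m<d j. \<Sum>k<d j.
        cmscale (cinner (psi j m) ((matrix_inv P ** Q) *v psi j k)) (ketbra (psi j m) (psi j k)))"

end

theory Submission
  imports Defs
begin

text \<open>The coefficient functions Vt assemble into the block matrix V(t) with entries Vt j t m k
  in block j, which solves i V' = K V for the block-diagonal part K = (sum over j of E j H E j)
  of H. Hence V(t) is unitary and commutes with every E j, i.e. V(t) lies in G, and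
  Util(t) = U(0,t) V(t). The vectors U(t,0) psibar j k t form orthonormal bases of the ranges of
  the E j, so also Ubar(t) = U(0,t) g(t) with g(t) in G, and Util(t), Ubar(t) lie in the same
  coset. Finally Util' = -i U(0,t) (K - H) V, and K - H has vanishing diagonal blocks, which are
  exactly what the canonical connection sees.

  Neither X0, the cyclicity of the E j, nor the endpoint values and the differentiability of
  psibar are needed for this statement.\<close>

section \<open>Adjoints, inner products and unitary matrices\<close>

lemma adj_adj [simp]: "adj (adj M) = M"
  by (simp add: adj_def vec_eq_iff)

lemma adj_mult: "adj (A ** B) = adj B ** adj (A::complex^'n^'n)"
  by (simp add: adj_def vec_eq_iff matrix_matrix_mult_def mult.commute)

lemma adj_add: "adj (A + B) = adj A + adj B"
  by (simp add: adj_def vec_eq_iff)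

lemma adj_mat_1 [simp]: "adj (mat 1 :: complex^'n^'n) = mat 1"
  by (simp add: adj_def vec_eq_iff mat_def)

lemma adj_scaleR: "adj (r *\<^sub>R M) = r *\<^sub>R adj M"
  by (simp add: adj_def vec_eq_iff)

lemma adj_cmscale: "adj (cmscale c M) = cmscale (cnj c) (adj M)"
  by (simp add: adj_def cmscale_def vec_eq_iff)

lemma adj_sum: "adj (sum f S) = (\<Sum>i\<in>S. adj (f i))"
  by (induction S rule: infinite_finite_induct) (auto simp: adj_add adj_def vec_eq_iff)

lemma cinner_adj: "cinner x (M *v y) = cinner (adj M *v x) (y::complex^'n)"
proof -
  have "cinner x (M *v y) = (\<Sum>i\<in>UNIV. \<Sum>j\<in>UNIV. cnj (x$i) * M$i$j * y$j)"
    by (simp add: cinner_def matrix_vector_mult_def sum_distrib_left mult.assoc)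
  also have "\<dots> = (\<Sum>j\<in>UNIV. \<Sum>i\<in>UNIV. cnj (x$i) * M$i$j * y$j)"
    by (rule sum.swap)
  also have "\<dots> = cinner (adj M *v x) y"
    by (simp add: cinner_def matrix_vector_mult_def adj_def sum_distrib_right sum_distrib_left
        ac_simps)
  finally show ?thesis .
qed

lemma cinner_adj_right: "cinner x (adj M *v y) = cinner (M *v x) (y::complex^'n)"
  by (metis adj_adj cinner_adj)

lemma cinner_add_right: "cinner x (y + z) = cinner x y + cinner x z"
  by (simp add: cinner_def distrib_left sum.distrib)

lemma cinner_add_left: "cinner (x + y) z = cinner x z + cinner y z"
  by (simp add: cinner_def distrib_right sum.distrib)

lemma cinner_diff_right: "cinner x (y - z) = cinner x y - cinner x z"
  by (simp add: cinner_def right_diff_distrib sum_subtractf)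

lemma cinner_scale_right: "cinner x (c *s y) = c * cinner x y"
  by (simp add: cinner_def sum_distrib_left mult.left_commute)

lemma cinner_scale_left: "cinner (c *s x) y = cnj c * cinner x y"
  by (simp add: cinner_def sum_distrib_left mult.assoc)

lemma cinner_zero_right [simp]: "cinner x 0 = 0"
  by (simp add: cinner_def)

lemma cinner_sum_right: "cinner x (sum f S) = (\<Sum>i\<in>S. cinner x (f i))"
  by (induction S rule: infinite_finite_induct) (auto simp: cinner_add_right)

lemma cinner_sum_left: "cinner (sum f S) y = (\<Sum>i\<in>S. cinner (f i) y)"
  by (induction S rule: infinite_finite_induct) (simp_all add: cinner_add_left cinner_def[of 0])

lemma cinner_commute_cnj: "cnj (cinner x y) = cinner y x"
  by (simp add: cinner_def mult.commute)

lemma ketbra_mult_vec: "ketbra a b *v x = cinner b x *s a"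
  by (simp add: ketbra_def cinner_def matrix_vector_mult_def vec_eq_iff sum_distrib_right
      sum_distrib_left ac_simps)

lemma cmscale_mult_vec: "cmscale c M *v x = c *s (M *v x)"
  by (simp add: cmscale_def matrix_vector_mult_def vec_eq_iff sum_distrib_left mult.assoc)

lemma sum_mult_vec: "sum f S *v x = (\<Sum>i\<in>S. f i *v x)"
  by (induction S rule: infinite_finite_induct) (auto simp: matrix_vector_mult_add_rdistrib)

lemma mult_vec_sum: "A *v sum f S = (\<Sum>i\<in>S. A *v f i)"
  by (induction S rule: infinite_finite_induct) (auto simp: matrix_vector_right_distrib)

lemma matrix_mult_cmscale_left: "cmscale c A ** B = cmscale c (A ** B)"
  by (simp add: cmscale_def matrix_matrix_mult_def vec_eq_iff sum_distrib_left mult.assoc)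

lemma matrix_mult_cmscale_right: "A ** cmscale c B = cmscale c (A ** B)"
  by (simp add: cmscale_def matrix_matrix_mult_def vec_eq_iff sum_distrib_left mult.left_commute)

lemma cmscale_cmscale: "cmscale a (cmscale b M) = cmscale (a * b) M"
  by (simp add: cmscale_def vec_eq_iff mult.assoc)

lemma cmscale_zero_left [simp]: "cmscale 0 M = 0"
  by (simp add: cmscale_def vec_eq_iff)

lemma cmscale_add_left: "cmscale a M + cmscale b M = cmscale (a + b) M"
  by (simp add: cmscale_def vec_eq_iff distrib_right)

lemma cmscale_sum: "cmscale c (sum f S) = (\<Sum>i\<in>S. cmscale c (f i))"
  by (induction S rule: infinite_finite_induct) (auto simp: cmscale_def vec_eq_iff distrib_left)

lemma scalar_mult_sum_right: "c *s sum f S = (\<Sum>i\<in>S. c *s (f i::complex^'n))"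
  by (simp add: vec_eq_iff sum_component sum_distrib_left)

lemma scalar_mult_sum_left: "sum f S *s (x::complex^'n) = (\<Sum>i\<in>S. f i *s x)"
  by (simp add: vec_eq_iff sum_component sum_distrib_right)

lemma ketbra_scale_left: "cmscale c (ketbra a b) = ketbra (c *s a) b"
  by (simp add: cmscale_def ketbra_def vec_eq_iff mult.assoc)

lemma ketbra_sum_left: "ketbra (sum f S) b = (\<Sum>i\<in>S. ketbra (f i) b)"
  by (induction S rule: infinite_finite_induct) (auto simp: ketbra_def vec_eq_iff distrib_right)

lemma unitary_adj: "unitary M \<Longrightarrow> unitary (adj M)"
  by (simp add: unitary_def)

lemma unitary_mult: "unitary A \<Longrightarrow> unitary B \<Longrightarrow> unitary (A ** (B::complex^'n^'n))"
  unfolding unitary_def adj_mult by (metis matrix_mul_assoc matrix_mul_lid)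

lemma unitary_adj_mult_vec: "unitary A \<Longrightarrow> adj A *v (A *v x) = x"
  by (simp add: unitary_def matrix_vector_mul_assoc)

lemma unitary_mult_adj_vec: "unitary A \<Longrightarrow> A *v (adj A *v x) = x"
  by (simp add: unitary_def matrix_vector_mul_assoc)

lemma unitaryI_left: "adj M ** M = mat 1 \<Longrightarrow> unitary (M::complex^'n^'n)"
  by (simp add: unitary_def matrix_left_right_inverse)

lemma matrix_inv_unitary:
  assumes "unitary M" shows "matrix_inv M = adj M"
proof -
  have "M ** matrix_inv M = mat 1 \<and> matrix_inv M ** M = mat 1"
    unfolding matrix_inv_def by (rule someI[of _ "adj M"]) (use assms in \<open>simp add: unitary_def\<close>)
  then show ?thesis
    using assms unfolding unitary_def by (metis matrix_mul_assoc matrix_mul_rid)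
qed

lemma cinner_unitary: "unitary M \<Longrightarrow> cinner (M *v x) (M *v y) = cinner x y"
  by (simp add: cinner_adj matrix_vector_mul_assoc unitary_def)

lemma matrix_add_rdistrib: "(B + C) ** A = B ** A + C ** (A::complex^'n^'n)"
  by (simp add: matrix_matrix_mult_def vec_eq_iff distrib_right sum.distrib)

lemma matrix_diff_rdistrib: "(B - C) ** A = B ** A - C ** (A::complex^'n^'n)"
  by (simp add: matrix_matrix_mult_def vec_eq_iff left_diff_distrib sum_subtractf)

lemma matrix_diff_ldistrib: "A ** (B - C) = A ** B - A ** (C::complex^'n^'n)"
  by (simp add: matrix_matrix_mult_def vec_eq_iff right_diff_distrib sum_subtractf)

lemma cmscale_diff: "cmscale c (A - B) = cmscale c A - cmscale c B"
  by (simp add: cmscale_def vec_eq_iff right_diff_distrib)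

section \<open>Derivatives of matrix-valued functions\<close>

lemma scaleR_matrix_entry: "((r::real) *\<^sub>R (M::complex^'n^'m))$i$j = of_real r * M$i$j"
  by (simp only: vector_scaleR_component) (simp add: scaleR_conv_of_real)

lemma matrix_mult_scaleR_right: "(A::complex^'n^'n) ** (r *\<^sub>R B) = r *\<^sub>R (A ** B)"
  by (simp add: matrix_matrix_mult_def vec_eq_iff scaleR_matrix_entry sum_distrib_left
      scaleR_sum_right ac_simps)

lemma matrix_mult_scaleR_left: "(r *\<^sub>R A) ** (B::complex^'n^'n) = r *\<^sub>R (A ** B)"
  by (simp add: matrix_matrix_mult_def vec_eq_iff scaleR_matrix_entry sum_distrib_left
      scaleR_sum_right ac_simps)

lemma bounded_bilinear_matrix_mult:
  "bounded_bilinear (\<lambda>(A::complex^'n::finite^'n) (B::complex^'n^'n). A ** B)"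
  unfolding bilinear_conv_bounded_bilinear[symmetric] bilinear_def
  by (auto intro!: linearI simp: matrix_add_ldistrib matrix_add_rdistrib
      matrix_mult_scaleR_right matrix_mult_scaleR_left)

lemma bounded_linear_adj: "bounded_linear (adj :: complex^'n::finite^'n \<Rightarrow> _)"
  unfolding linear_conv_bounded_linear[symmetric]
  by (auto intro!: linearI simp: adj_add adj_scaleR)

lemma has_vector_derivative_matrix_mult:
  "(f has_vector_derivative f') (at x within s) \<Longrightarrow> (g has_vector_derivative g') (at x within s) \<Longrightarrow>
   ((\<lambda>x. (f x::complex^'n::finite^'n) ** (g x::complex^'n^'n)) has_vector_derivative
      (f x ** g' + f' ** g x)) (at x within s)"
  using bounded_bilinear.has_vector_derivative[OF bounded_bilinear_matrix_mult] by blast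

lemma has_vector_derivative_adj:
  "(f has_vector_derivative f') F \<Longrightarrow>
   ((\<lambda>x. adj (f x::complex^'n::finite^'n)) has_vector_derivative adj f') F"
  using bounded_linear.has_vector_derivative[OF bounded_linear_adj] by blast

lemma continuous_on_matrix_mult:
  "continuous_on s f \<Longrightarrow> continuous_on s g \<Longrightarrow>
   continuous_on s (\<lambda>x. (f x::complex^'n::finite^'n) ** (g x::complex^'n^'n))"
  using bounded_bilinear.continuous_on[OF bounded_bilinear_matrix_mult] by blast

lemma has_vector_derivative_cmscale:
  "(g has_vector_derivative g') F \<Longrightarrow>
   ((\<lambda>x. cmscale (g x) (K::complex^'n::finite^'n)) has_vector_derivative cmscale g' K) F"
proof -
  have "bounded_linear (\<lambda>c. cmscale c K)"
    unfolding linear_conv_bounded_linear[symmetric]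
    by (auto intro!: linearI simp: cmscale_def vec_eq_iff distrib_right scaleR_matrix_entry)
  then show "(g has_vector_derivative g') F \<Longrightarrow> ?thesis"
    using bounded_linear.has_vector_derivative by blast
qed

lemma continuous_on_cmscale:
  "continuous_on s f \<Longrightarrow> continuous_on s (\<lambda>x. cmscale c (f x::complex^'n::finite^'n))"
proof -
  have "bounded_linear (cmscale c :: complex^'n^'n \<Rightarrow> _)"
    unfolding linear_conv_bounded_linear[symmetric]
    by (auto intro!: linearI simp: cmscale_def vec_eq_iff distrib_left scaleR_matrix_entry)
  then show "continuous_on s f \<Longrightarrow> ?thesis"
    using bounded_linear.continuous_on by blast
qed

text \<open>Since K is self-adjoint, the derivative of V* V is -i V* K V + i V* K V = 0.\<close>
lemma unitary_schroedinger_solution: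
  fixes V K :: "real \<Rightarrow> complex^'n::finite^'n"
  assumes V_deriv: "\<And>t. (V has_vector_derivative cmscale (- \<i>) (K t ** V t)) (at t)"
    and K_sa: "\<And>t. adj (K t) = K t"
    and V_0: "V 0 = mat 1"
  shows "unitary (V t)"
proof (rule unitaryI_left)
  have "((\<lambda>s. adj (V s) ** V s) has_vector_derivative 0) (at s within UNIV)" for s
  proof -
    let ?V' = "cmscale (- \<i>) (K s ** V s)"
    have "((\<lambda>s. adj (V s) ** V s) has_vector_derivative adj (V s) ** ?V' + adj ?V' ** V s) (at s)"
      by (intro has_vector_derivative_matrix_mult has_vector_derivative_adj V_deriv)
    moreover have "adj (V s) ** ?V' + adj ?V' ** V s = 0"
      by (simp add: adj_cmscale adj_mult K_sa matrix_mult_cmscale_left matrix_mult_cmscale_right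
          matrix_mul_assoc cmscale_add_left)
    ultimately show ?thesis by simp
  qed
  then obtain c where "\<And>s. s \<in> UNIV \<Longrightarrow> adj (V s) ** V s = c"
    using has_vector_derivative_zero_constant[of UNIV "\<lambda>s. adj (V s) ** V s"] by blast
  then have "adj (V t) ** V t = adj (V 0) ** V 0" by simp
  then show "adj (V t) ** V t = mat 1"
    by (simp add: V_0)
qed

locale unitary_propagator =
  fixes H :: "real \<Rightarrow> complex^'n::finite^'n" and U :: "real \<Rightarrow> real \<Rightarrow> complex^'n^'n"
  assumes H_sa: "\<And>t. self_adjoint (H t)"
    and U_unitary: "\<And>t s. unitary (U t s)"
    and U_id: "\<And>t. U t t = mat 1"
    and U_comp: "\<And>t r s. U t r ** U r s = U t s"
    and U_deriv: "\<And>t s. ((\<lambda>t. U t s) has_vector_derivative cmscale (- \<i>) (H t ** U t s)) (at t)"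
begin

lemma adj_U: "adj (U t s) = U s t"
proof -
  have "adj (U t s) = adj (U t s) ** (U t s ** U s t)" using U_comp U_id by simp
  also have "\<dots> = U s t" using U_unitary[of t s] by (simp add: unitary_def matrix_mul_assoc)
  finally show ?thesis .
qed

lemma U_deriv_right: "((\<lambda>s. U r s) has_vector_derivative cmscale \<i> (U r t ** H t)) (at t)"
proof -
  have "((\<lambda>s. adj (U s r)) has_vector_derivative adj (cmscale (- \<i>) (H t ** U t r))) (at t)"
    by (intro has_vector_derivative_adj U_deriv)
  then show ?thesis
    using H_sa by (simp add: adj_U adj_cmscale adj_mult self_adjoint_def)
qed

end

section \<open>Block structure of a partitioned orthonormal basis\<close>

locale partitioned_onb =
  fixes n :: nat and d :: "nat \<Rightarrow> nat" and psi :: "nat \<Rightarrow> nat \<Rightarrow> complex^'n::finite"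
    and E :: "nat \<Rightarrow> complex^'n^'n"
  assumes E_self_adjoint: "\<And>j. j < n \<Longrightarrow> self_adjoint (E j)"
    and E_idem: "\<And>j. j < n \<Longrightarrow> E j ** E j = E j"
    and E_orth: "\<And>j l. j < n \<Longrightarrow> l < n \<Longrightarrow> j \<noteq> l \<Longrightarrow> E j ** E l = 0"
    and E_sum: "(\<Sum>j<n. E j) = mat 1"
    and psi_onb: "\<And>j. j < n \<Longrightarrow> onb_of (op_range (E j)) (psi j) (d j)"
begin

lemma adj_E: "j < n \<Longrightarrow> adj (E j) = E j"
  using E_self_adjoint self_adjoint_def by blast

lemma E_mult_E_vec: "j < n \<Longrightarrow> E j *v (E j *v x) = E j *v x"
  by (simp add: matrix_vector_mul_assoc E_idem)

lemma cinner_E: "j < n \<Longrightarrow> cinner x (E j *v y) = cinner (E j *v x) y"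
  using cinner_adj adj_E by metis

lemma cinner_blocks_orth:
  assumes "j < n" "l < n" "j \<noteq> l" and x: "E j *v x = x" and y: "E l *v y = y"
  shows "cinner x y = 0"
proof -
  have "cinner x y = cinner (E j *v x) (E l *v y)" using x y by simp
  also have "\<dots> = cinner x ((E j ** E l) *v y)"
    using assms(1) by (metis cinner_E matrix_vector_mul_assoc)
  finally show ?thesis using E_orth assms(1-3) by simp
qed

lemma E_psi: "j < n \<Longrightarrow> k < d j \<Longrightarrow> E j *v psi j k = psi j k"
  using psi_onb[of j] E_idem unfolding onb_of_def op_range_def
  by (auto simp: matrix_vector_mul_assoc)

lemma E_psi_eq: "j < n \<Longrightarrow> a < n \<Longrightarrow> b < d a \<Longrightarrow> E j *v psi a b = (if j = a then psi a b else 0)"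
  using E_psi E_orth by (metis matrix_vector_mul_assoc matrix_vector_mult_0)

lemma cinner_psi:
  assumes "j < n" "a < n" "m < d j" "b < d a"
  shows "cinner (psi j m) (psi a b) = (if j = a \<and> m = b then 1 else 0)"
proof (cases "j = a")
  case True
  then show ?thesis using psi_onb[of j] assms unfolding onb_of_def by auto
qed (use assms cinner_blocks_orth E_psi in auto)

lemma psi_expansion_block:
  assumes j: "j < n" and y: "E j *v y = y"
  shows "y = (\<Sum>m<d j. cinner (psi j m) y *s psi j m)"
proof -
  have "y \<in> op_range (E j)" using y unfolding op_range_def by (metis (mono_tags) mem_Collect_eq)
  then obtain c where c: "y = (\<Sum>k<d j. c k *s psi j k)"
    using psi_onb[OF j] unfolding onb_of_def by blast
  have "cinner (psi j m) y = c m" if "m < d j" for m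
  proof -
    have "cinner (psi j m) y = (\<Sum>k<d j. if k = m then c k else 0)"
      unfolding c cinner_sum_right cinner_scale_right
      by (rule sum.cong) (use cinner_psi j that in auto)
    then show ?thesis using that by simp
  qed
  then show ?thesis by (subst c) simp
qed

lemma cinner_block_parseval:
  assumes "j < n" and "E j *v y = y"
  shows "(\<Sum>l<d j. cinner x (psi j l) * cinner (psi j l) y) = cinner x y"
  using arg_cong[OF psi_expansion_block[OF assms], of "cinner x"]
  by (simp add: cinner_sum_right cinner_scale_right mult.commute)

lemma psi_expansion: "x = (\<Sum>j<n. \<Sum>m<d j. cinner (psi j m) x *s psi j m)"
proof -
  have "x = (\<Sum>j<n. E j *v x)" using sum_mult_vec[of E "{..<n}" x] by (simp add: E_sum)
  also have "\<dots> = (\<Sum>j<n. \<Sum>m<d j. cinner (psi j m) x *s psi j m)"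
  proof (rule sum.cong)
    fix j assume "j \<in> {..<n}"
    then have j: "j < n" by simp
    have "E j *v x = (\<Sum>m<d j. cinner (psi j m) (E j *v x) *s psi j m)"
      by (rule psi_expansion_block[OF j E_mult_E_vec[OF j]])
    also have "\<dots> = (\<Sum>m<d j. cinner (psi j m) x *s psi j m)"
      by (rule sum.cong) (use j E_psi cinner_E in auto)
    finally show "E j *v x = (\<Sum>m<d j. cinner (psi j m) x *s psi j m)" .
  qed simp
  finally show ?thesis .
qed

lemma vec_eq_psiI:
  assumes "\<And>j k. j < n \<Longrightarrow> k < d j \<Longrightarrow> cinner (psi j k) x = cinner (psi j k) y"
  shows "x = y"
  using assms psi_expansion[of x] psi_expansion[of y]
  by (metis (no_types, lifting) lessThan_iff sum.cong)

lemma matrix_eq_psiI: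
  assumes "\<And>j k. j < n \<Longrightarrow> k < d j \<Longrightarrow> A *v psi j k = B *v psi j k"
  shows "A = B"
proof (subst matrix_eq, intro allI)
  fix x
  have "A *v x = (\<Sum>j<n. \<Sum>m<d j. cinner (psi j m) x *s (A *v psi j m))"
    by (subst psi_expansion[of x]) (simp add: mult_vec_sum vector_scalar_commute)
  also have "\<dots> = (\<Sum>j<n. \<Sum>m<d j. cinner (psi j m) x *s (B *v psi j m))"
    using assms by simp
  also have "\<dots> = B *v x"
    by (subst (2) psi_expansion[of x]) (simp add: mult_vec_sum vector_scalar_commute)
  finally show "A *v x = B *v x" .
qed

definition basis_map :: "(nat \<Rightarrow> nat \<Rightarrow> complex^'n) \<Rightarrow> complex^'n^'n" where
  "basis_map f = (\<Sum>j<n. \<Sum>k<d j. ketbra (f j k) (psi j k))"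

lemma basis_map_psi:
  assumes "a < n" "b < d a"
  shows "basis_map f *v psi a b = f a b"
proof -
  have "basis_map f *v psi a b = (\<Sum>j<n. \<Sum>k<d j. if j = a \<and> k = b then f j k else 0)"
    unfolding basis_map_def sum_mult_vec ketbra_mult_vec
    by (intro sum.cong refl) (use assms cinner_psi in auto)
  also have "\<dots> = (\<Sum>j<n. if j = a then f a b else 0)"
    by (intro sum.cong refl) (use assms in auto)
  finally show ?thesis using assms by simp
qed

lemma matrix_mult_basis_map: "A ** basis_map f = basis_map (\<lambda>j k. A *v f j k)"
  by (rule matrix_eq_psiI) (simp add: basis_map_psi matrix_vector_mul_assoc[symmetric])

lemma basis_map_commute_E:
  assumes f: "\<And>j k. j < n \<Longrightarrow> k < d j \<Longrightarrow> E j *v f j k = f j k" and l: "l < n"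
  shows "basis_map f ** E l = E l ** basis_map f"
proof (rule matrix_eq_psiI)
  fix a b assume ab: "a < n" "b < d a"
  have "E l *v f a b = (if l = a then f a b else 0)"
    using f[OF ab] E_orth[OF l ab(1)] by (metis matrix_vector_mul_assoc matrix_vector_mult_0)
  then show "(basis_map f ** E l) *v psi a b = (E l ** basis_map f) *v psi a b"
    using ab l by (simp add: matrix_vector_mul_assoc[symmetric] E_psi_eq basis_map_psi)
qed

lemma basis_map_unitary:
  assumes f: "\<And>j k. j < n \<Longrightarrow> k < d j \<Longrightarrow> E j *v f j k = f j k"
    and f_orth: "\<And>j m k. j < n \<Longrightarrow> m < d j \<Longrightarrow> k < d j \<Longrightarrow>
      cinner (f j m) (f j k) = (if m = k then 1 else 0)"
  shows "unitary (basis_map f)"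
proof (rule unitaryI_left, rule matrix_eq_psiI, rule vec_eq_psiI)
  fix a b a' b' assume ab: "a < n" "b < d a" and ab': "a' < n" "b' < d a'"
  have "cinner (psi a' b') ((adj (basis_map f) ** basis_map f) *v psi a b) =
      cinner (f a' b') (f a b)"
    using ab ab' by (simp add: matrix_vector_mul_assoc[symmetric] cinner_adj_right basis_map_psi)
  also have "\<dots> = cinner (psi a' b') (mat 1 *v psi a b)"
  proof (cases "a' = a")
    case True
    then show ?thesis using ab ab' f_orth[of a b' b] by (simp add: cinner_psi)
  next
    case False
    then show ?thesis
      using ab ab' cinner_blocks_orth[OF ab'(1) ab(1) _ f f] by (simp add: cinner_psi)
  qed
  finally show "cinner (psi a' b') ((adj (basis_map f) ** basis_map f) *v psi a b) =
      cinner (psi a' b') (mat 1 *v psi a b)" .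
qed

definition block_matrix :: "(nat \<Rightarrow> nat \<Rightarrow> nat \<Rightarrow> complex) \<Rightarrow> complex^'n^'n" where
  "block_matrix u = (\<Sum>j<n. \<Sum>m<d j. \<Sum>k<d j. cmscale (u j m k) (ketbra (psi j m) (psi j k)))"

lemma block_matrix_eq_basis_map:
  "block_matrix u = basis_map (\<lambda>j k. \<Sum>m<d j. u j m k *s psi j m)"
  unfolding block_matrix_def basis_map_def ketbra_sum_left ketbra_scale_left
  by (rule sum.cong[OF refl], rule sum.swap)

lemma block_matrix_psi:
  "a < n \<Longrightarrow> b < d a \<Longrightarrow> block_matrix u *v psi a b = (\<Sum>m<d a. u a m b *s psi a m)"
  unfolding block_matrix_eq_basis_map by (rule basis_map_psi)

lemma E_block_combination: "j < n \<Longrightarrow> E j *v (\<Sum>m<d j. c m *s psi j m) = (\<Sum>m<d j. c m *s psi j m)"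
  by (simp add: mult_vec_sum vector_scalar_commute E_psi)

lemma block_matrix_commute_E: "l < n \<Longrightarrow> block_matrix u ** E l = E l ** block_matrix u"
  unfolding block_matrix_eq_basis_map by (rule basis_map_commute_E) (rule E_block_combination)

lemma cinner_block_combination:
  assumes j: "j < n"
  shows "cinner (\<Sum>m<d j. a m *s psi j m) (\<Sum>m<d j. b m *s psi j m) = (\<Sum>m<d j. cnj (a m) * b m)"
proof -
  have "cinner (\<Sum>m<d j. a m *s psi j m) (psi j k) = cnj (a k)" if "k < d j" for k
  proof -
    have "cinner (\<Sum>m<d j. a m *s psi j m) (psi j k) = (\<Sum>m<d j. if m = k then cnj (a m) else 0)"
      unfolding cinner_sum_left cinner_scale_left
      by (rule sum.cong[OF refl]) (use j that in \<open>auto simp: cinner_psi\<close>)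
    then show ?thesis using that by simp
  qed
  then show ?thesis
    unfolding cinner_sum_right cinner_scale_right by (intro sum.cong refl) (simp add: mult.commute)
qed

lemma block_matrix_unitary:
  assumes "\<And>j m k. j < n \<Longrightarrow> m < d j \<Longrightarrow> k < d j \<Longrightarrow>
    (\<Sum>l<d j. cnj (u j l m) * u j l k) = (if m = k then 1 else 0)"
  shows "unitary (block_matrix u)"
  unfolding block_matrix_eq_basis_map
  using assms by (intro basis_map_unitary E_block_combination)
    (simp_all add: cinner_block_combination)

lemma blockG_iff: "M \<in> blockG n d psi \<longleftrightarrow> unitary M \<and> (\<forall>j<n. M ** E j = E j ** M)"
proof
  assume "M \<in> blockG n d psi"
  then show "unitary M \<and> (\<forall>j<n. M ** E j = E j ** M)"
    unfolding blockG_def block_matrix_def[symmetric]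
    by (auto intro!: block_matrix_unitary block_matrix_commute_E)
next
  assume M: "unitary M \<and> (\<forall>j<n. M ** E j = E j ** M)"
  define u where "u j m k = cinner (psi j m) (M *v psi j k)" for j m k
  have E_M: "E j *v (M *v y) = M *v y" "E j *v (adj M *v y) = adj M *v y"
    if "j < n" "E j *v y = y" for j y
    using M that adj_E by (metis adj_mult matrix_vector_mul_assoc)+
  have "M = block_matrix u"
  proof (rule matrix_eq_psiI)
    fix a b assume ab: "a < n" "b < d a"
    show "M *v psi a b = block_matrix u *v psi a b"
      using psi_expansion_block[OF ab(1) E_M(1)[OF ab(1) E_psi[OF ab]]] ab
      by (simp add: block_matrix_psi u_def)
  qed
  moreover have "(\<Sum>l<d j. cnj (u j l m) * u j l k) = (if m = k then 1 else 0)"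
    and "(\<Sum>l<d j. u j m l * cnj (u j k l)) = (if m = k then 1 else 0)"
    if j: "j < n" and mk: "m < d j" "k < d j" for j m k
  proof -
    have "(\<Sum>l<d j. cnj (u j l m) * u j l k) = cinner (M *v psi j m) (M *v psi j k)"
      unfolding u_def cinner_commute_cnj using j mk E_M(1) E_psi
      by (intro cinner_block_parseval) auto
    then show "(\<Sum>l<d j. cnj (u j l m) * u j l k) = (if m = k then 1 else 0)"
      using M j mk by (simp add: cinner_unitary cinner_psi)
    have "(\<Sum>l<d j. u j m l * cnj (u j k l)) =
        (\<Sum>l<d j. cinner (adj M *v psi j m) (psi j l) * cinner (psi j l) (adj M *v psi j k))"
      unfolding u_def by (intro sum.cong refl) (metis cinner_adj_right cinner_commute_cnj)
    also have "\<dots> = cinner (adj M *v psi j m) (adj M *v psi j k)"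
      using j mk E_M(2) E_psi by (intro cinner_block_parseval) auto
    finally show "(\<Sum>l<d j. u j m l * cnj (u j k l)) = (if m = k then 1 else 0)"
      using M j mk by (simp add: cinner_unitary unitary_adj cinner_psi)
  qed
  ultimately show "M \<in> blockG n d psi"
    unfolding blockG_def block_matrix_def[symmetric] by blast
qed

lemma blockG_mult: "g \<in> blockG n d psi \<Longrightarrow> h \<in> blockG n d psi \<Longrightarrow> g ** h \<in> blockG n d psi"
  unfolding blockG_iff by (auto simp: unitary_mult) (metis matrix_mul_assoc)

lemma blockG_adj: "g \<in> blockG n d psi \<Longrightarrow> adj g \<in> blockG n d psi"
  unfolding blockG_iff using adj_E by (metis adj_mult unitary_adj)

lemma Pi_quot_mult_blockG:
  assumes g: "g \<in> blockG n d psi"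
  shows "Pi_quot n d psi (A ** g) = Pi_quot n d psi A"
proof -
  have "A ** h = A ** g ** (adj g ** h)" for h
    using g unfolding blockG_iff unitary_def by (metis matrix_mul_assoc matrix_mul_lid)
  then show ?thesis
    unfolding Pi_quot_def using blockG_mult[OF g] blockG_mult[OF blockG_adj[OF g]]
    by (metis (no_types, opaque_lifting) matrix_mul_assoc)
qed

lemma block_matrix_mult:
  "block_matrix u ** block_matrix v = block_matrix (\<lambda>j m k. \<Sum>l<d j. u j m l * v j l k)"
proof (rule matrix_eq_psiI)
  fix a b assume ab: "a < n" "b < d a"
  have "(block_matrix u ** block_matrix v) *v psi a b =
      (\<Sum>l<d a. v a l b *s (block_matrix u *v psi a l))"
    using ab by (simp add: matrix_vector_mul_assoc[symmetric] block_matrix_psi mult_vec_sum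
        vector_scalar_commute)
  also have "\<dots> = (\<Sum>l<d a. \<Sum>m<d a. (u a m l * v a l b) *s psi a m)"
    using ab by (intro sum.cong refl)
      (simp add: block_matrix_psi scalar_mult_sum_right vector_smult_assoc mult.commute)
  also have "\<dots> = (\<Sum>m<d a. (\<Sum>l<d a. u a m l * v a l b) *s psi a m)"
    by (subst sum.swap) (simp add: scalar_mult_sum_left)
  also have "\<dots> = block_matrix (\<lambda>j m k. \<Sum>l<d j. u j m l * v j l k) *v psi a b"
    using ab by (simp add: block_matrix_psi)
  finally show "(block_matrix u ** block_matrix v) *v psi a b =
      block_matrix (\<lambda>j m k. \<Sum>l<d j. u j m l * v j l k) *v psi a b" .
qed

lemma cmscale_block_matrix: "cmscale c (block_matrix u) = block_matrix (\<lambda>j m k. c * u j m k)"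
  unfolding block_matrix_def by (simp add: cmscale_sum cmscale_cmscale)

lemma block_matrix_eq_mat_1:
  assumes "\<And>j m k. j < n \<Longrightarrow> m < d j \<Longrightarrow> k < d j \<Longrightarrow> u j m k = (if m = k then 1 else 0)"
  shows "block_matrix u = mat 1"
proof (rule matrix_eq_psiI)
  fix a b assume ab: "a < n" "b < d a"
  have "block_matrix u *v psi a b = (\<Sum>m<d a. if m = b then psi a m else 0)"
    unfolding block_matrix_psi[OF ab] by (intro sum.cong refl) (simp add: assms ab)
  then show "block_matrix u *v psi a b = mat 1 *v psi a b"
    using ab by simp
qed

lemma has_vector_derivative_block_matrix:
  assumes "\<And>j m k. j < n \<Longrightarrow> m < d j \<Longrightarrow> k < d j \<Longrightarrow>
    ((\<lambda>s. u s j m k) has_vector_derivative u' j m k) F"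
  shows "((\<lambda>s. block_matrix (u s)) has_vector_derivative block_matrix u') F"
  unfolding block_matrix_def
  by (intro has_vector_derivative_sum has_vector_derivative_cmscale assms) auto

definition block_diag :: "complex^'n^'n \<Rightarrow> complex^'n^'n" where
  "block_diag M = (\<Sum>j<n. E j ** M ** E j)"

lemma block_diag_mult_vec:
  assumes j: "j < n" and y: "E j *v y = y"
  shows "block_diag M *v y = E j *v (M *v y)"
proof -
  have "block_diag M *v y = (\<Sum>l<n. E l *v (M *v (E l *v y)))"
    by (simp add: block_diag_def sum_mult_vec matrix_vector_mul_assoc matrix_mul_assoc)
  also have "\<dots> = (\<Sum>l<n. if l = j then E j *v (M *v y) else 0)"
  proof (intro sum.cong refl)
    fix l assume "l \<in> {..<n}"
    then have "l \<noteq> j \<Longrightarrow> E l *v y = 0"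
      using y E_orth[of l j] j by (metis lessThan_iff matrix_vector_mul_assoc matrix_vector_mult_0)
    then show "E l *v (M *v (E l *v y)) = (if l = j then E j *v (M *v y) else 0)"
      using y by auto
  qed
  finally show ?thesis using j by simp
qed

lemma block_diag_eq_block_matrix:
  "block_diag M = block_matrix (\<lambda>j m k. cinner (psi j m) (M *v psi j k))"
proof (rule matrix_eq_psiI)
  fix a b assume ab: "a < n" "b < d a"
  have "block_diag M *v psi a b =
      (\<Sum>m<d a. cinner (psi a m) (E a *v (M *v psi a b)) *s psi a m)"
    using ab
    by (simp add: block_diag_mult_vec E_psi flip: psi_expansion_block[OF ab(1) E_mult_E_vec])
  also have "\<dots> = block_matrix (\<lambda>j m k. cinner (psi j m) (M *v psi j k)) *v psi a b"
    using ab by (simp add: block_matrix_psi cinner_E E_psi)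
  finally show "block_diag M *v psi a b = \<dots>" .
qed

lemma adj_block_diag: "adj (block_diag M) = block_diag (adj M)"
  unfolding block_diag_def adj_sum
  by (intro sum.cong refl) (simp add: adj_mult adj_E matrix_mul_assoc)

lemma cinner_block_diag:
  assumes "j < n" "E j *v x = x" "E j *v y = y"
  shows "cinner x (block_diag M *v y) = cinner x (M *v y)"
  using assms by (metis block_diag_mult_vec cinner_E)

lemma basis_map_conj_factor:
  assumes A: "unitary A"
    and f_range: "\<And>j k. j < n \<Longrightarrow> k < d j \<Longrightarrow> f j k \<in> op_range (A ** E j ** adj A)"
    and f_orth: "\<And>j m k. j < n \<Longrightarrow> m < d j \<Longrightarrow> k < d j \<Longrightarrow>
      cinner (f j m) (f j k) = (if m = k then 1 else 0)"
  shows "\<exists>g\<in>blockG n d psi. basis_map f = A ** g"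
proof
  have E_f: "E j *v (adj A *v f j k) = adj A *v f j k" if jk: "j < n" "k < d j" for j k
  proof -
    obtain y where "f j k = (A ** E j ** adj A) *v y"
      using f_range[OF jk] unfolding op_range_def by blast
    then have "adj A *v f j k = E j *v (adj A *v y)"
      using A by (simp add: matrix_vector_mul_assoc[symmetric] unitary_adj_mult_vec)
    then show ?thesis using jk(1) by (simp add: E_mult_E_vec)
  qed
  show "basis_map (\<lambda>j k. adj A *v f j k) \<in> blockG n d psi"
    unfolding blockG_iff using E_f f_orth A
    by (simp add: basis_map_unitary basis_map_commute_E cinner_unitary unitary_adj)
  show "basis_map f = A ** basis_map (\<lambda>j k. adj A *v f j k)"
    using A by (simp add: matrix_mult_basis_map unitary_mult_adj_vec)
qed

text \<open>The connection reads off the diagonal blocks of (A g)\<inverse> Q = c g* M g; since g is block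
  diagonal, these are conjugates of the diagonal blocks of M.\<close>
lemma can_conn_horizontal:
  assumes A: "unitary A" and g: "g \<in> blockG n d psi"
    and M: "\<And>j x y. j < n \<Longrightarrow> E j *v x = x \<Longrightarrow> E j *v y = y \<Longrightarrow> cinner x (M *v y) = 0"
  shows "can_conn n d psi (A ** g) (A ** cmscale c (M ** g)) = 0"
proof -
  have g_unitary: "unitary g" and g_E: "\<And>j. j < n \<Longrightarrow> g ** E j = E j ** g"
    using g unfolding blockG_iff by auto
  have "matrix_inv (A ** g) ** (A ** cmscale c (M ** g)) =
      adj g ** (adj A ** A) ** cmscale c (M ** g)"
    using A g_unitary by (simp add: matrix_inv_unitary unitary_mult adj_mult matrix_mul_assoc)
  also have "\<dots> = cmscale c (adj g ** M ** g)"
    using A by (simp add: unitary_def matrix_mult_cmscale_right matrix_mul_assoc)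
  finally have inv:
    "matrix_inv (A ** g) ** (A ** cmscale c (M ** g)) = cmscale c (adj g ** M ** g)" .
  have "cinner (psi j m) ((matrix_inv (A ** g) ** (A ** cmscale c (M ** g))) *v psi j k) = 0"
    if "j < n" "m < d j" "k < d j" for j m k
  proof -
    have "E j *v (g *v psi j l) = g *v psi j l" if "l < d j" for l
      using g_E[OF \<open>j < n\<close>] E_psi[OF \<open>j < n\<close> that] by (metis matrix_vector_mul_assoc)
    then show ?thesis
      using M[OF \<open>j < n\<close>] that(2,3)
      by (simp add: inv cmscale_mult_vec cinner_scale_right cinner_adj_right
          matrix_vector_mul_assoc[symmetric])
  qed
  then show ?thesis
    unfolding can_conn_def by (intro sum.neutral ballI) simp
qed

end

section \<open>The horizontal lift\<close>

text \<open>Vt j t is the coefficient matrix of the parallel transported basis of block j, expressed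
  in the basis U(0,t) psi j.\<close>
locale parallel_transport = partitioned_onb n d psi E + unitary_propagator H U
  for n d and psi :: "nat \<Rightarrow> nat \<Rightarrow> complex^'n::finite" and E H U +
  fixes Vt :: "nat \<Rightarrow> real \<Rightarrow> nat \<Rightarrow> nat \<Rightarrow> complex"
  assumes H_cont: "continuous_on UNIV H"
    and Vt_ode: "\<And>j t m k. j < n \<Longrightarrow> m < d j \<Longrightarrow> k < d j \<Longrightarrow>
      ((\<lambda>s. Vt j s m k) has_vector_derivative
         (- \<i>) * (\<Sum>l<d j. cinner (psi j m) (H t *v psi j l) * Vt j t l k)) (at t)"
    and Vt_init: "\<And>j m k. j < n \<Longrightarrow> m < d j \<Longrightarrow> k < d j \<Longrightarrow>
      Vt j 0 m k = (if m = k then 1 else 0)"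
begin

definition transport :: "real \<Rightarrow> complex^'n^'n" where
  "transport t = block_matrix (\<lambda>j m k. Vt j t m k)"

definition lift :: "real \<Rightarrow> complex^'n^'n" where
  "lift t = U 0 t ** transport t"

definition lift_velocity :: "real \<Rightarrow> complex^'n^'n" where
  "lift_velocity t = U 0 t ** cmscale (- \<i>) ((block_diag (H t) - H t) ** transport t)"

lemma transport_has_derivative:
  "(transport has_vector_derivative cmscale (- \<i>) (block_diag (H t) ** transport t)) (at t)"
proof -
  have "(transport has_vector_derivative block_matrix
      (\<lambda>j m k. - \<i> * (\<Sum>l<d j. cinner (psi j m) (H t *v psi j l) * Vt j t l k))) (at t)"
    unfolding transport_def[abs_def] by (rule has_vector_derivative_block_matrix) (rule Vt_ode)
  then show ?thesis
    by (simp add: transport_def block_diag_eq_block_matrix block_matrix_mult cmscale_block_matrix)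
qed

lemma transport_unitary: "unitary (transport t)"
proof (rule unitary_schroedinger_solution[OF transport_has_derivative])
  show "adj (block_diag (H t)) = block_diag (H t)" for t
    using H_sa by (simp add: adj_block_diag self_adjoint_def)
  show "transport 0 = mat 1"
    unfolding transport_def by (rule block_matrix_eq_mat_1) (rule Vt_init)
qed

lemma transport_in_blockG: "transport t \<in> blockG n d psi"
  unfolding blockG_iff using transport_unitary by (simp add: transport_def block_matrix_commute_E)

lemma lift_eq_basis_map: "lift t = basis_map (\<lambda>j k. \<Sum>m<d j. Vt j t m k *s (U 0 t *v psi j m))"
  by (simp add: lift_def transport_def block_matrix_eq_basis_map matrix_mult_basis_map
      mult_vec_sum vector_scalar_commute)

lemma lift_unitary: "unitary (lift t)"
  unfolding lift_def using U_unitary transport_unitary by (rule unitary_mult)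

lemma lift_has_derivative: "(lift has_vector_derivative lift_velocity t) (at t)"
proof -
  have "((\<lambda>s. U 0 s ** transport s) has_vector_derivative
      U 0 t ** cmscale (- \<i>) (block_diag (H t) ** transport t)
        + cmscale \<i> (U 0 t ** H t) ** transport t) (at t)"
    by (intro has_vector_derivative_matrix_mult U_deriv_right transport_has_derivative)
  moreover have "U 0 t ** cmscale (- \<i>) (block_diag (H t) ** transport t)
      + cmscale \<i> (U 0 t ** H t) ** transport t = lift_velocity t"
    by (simp add: lift_velocity_def matrix_mult_cmscale_left matrix_mult_cmscale_right
        matrix_diff_rdistrib matrix_diff_ldistrib cmscale_diff matrix_mul_assoc)
      (simp add: cmscale_def vec_eq_iff)
  ultimately show ?thesis
    by (simp add: lift_def[abs_def])
qed

lemma continuous_on_lift_velocity: "continuous_on S lift_velocity"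
proof -
  have "continuous_on S (\<lambda>s. U 0 s)" "continuous_on S transport"
    using U_deriv_right transport_has_derivative
    by (auto intro!: continuous_at_imp_continuous_on has_vector_derivative_continuous)
  moreover have "continuous_on S H"
    using H_cont continuous_on_subset by blast
  ultimately show ?thesis
    unfolding lift_velocity_def[abs_def] block_diag_def
    by (intro continuous_on_matrix_mult continuous_on_cmscale continuous_on_diff continuous_on_sum
        continuous_on_const) auto
qed

lemma Pi_quot_lift: "g \<in> blockG n d psi \<Longrightarrow> Pi_quot n d psi (lift t) = Pi_quot n d psi (U 0 t ** g)"
  unfolding lift_def by (simp add: Pi_quot_mult_blockG transport_in_blockG)

lemma can_conn_lift: "can_conn n d psi (lift t) (lift_velocity t) = 0"
proof -
  have "cinner x ((block_diag (H t) - H t) *v y) = 0"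
    if "j < n" "E j *v x = x" "E j *v y = y" for j x y
    using that by (simp add: matrix_vector_mult_diff_rdistrib cinner_diff_right cinner_block_diag)
  then show ?thesis
    unfolding lift_def lift_velocity_def
    using U_unitary transport_in_blockG by (blast intro: can_conn_horizontal)
qed

end

theorem proposition6p15:
  fixes H :: "real \<Rightarrow> complex^'n::finite^'n"
    and U :: "real \<Rightarrow> real \<Rightarrow> complex^'n^'n"
    and n :: nat and lam :: "nat \<Rightarrow> real" and E :: "nat \<Rightarrow> complex^'n^'n"
    and X0 :: "complex^'n^'n" and T :: real
    and d :: "nat \<Rightarrow> nat" and psi :: "nat \<Rightarrow> nat \<Rightarrow> complex^'n"
    and Vt :: "nat \<Rightarrow> real \<Rightarrow> nat \<Rightarrow> nat \<Rightarrow> complex"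
    and psibar :: "nat \<Rightarrow> nat \<Rightarrow> real \<Rightarrow> complex^'n"
    and psit psitil :: "nat \<Rightarrow> nat \<Rightarrow> real \<Rightarrow> complex^'n"
    and Hsub :: "nat \<Rightarrow> real \<Rightarrow> (complex^'n) set"
    and C :: "nat \<Rightarrow> real \<Rightarrow> nat \<Rightarrow> nat \<Rightarrow> complex"
    and Util Ubar :: "real \<Rightarrow> complex^'n^'n"
    and W :: "real \<Rightarrow> (complex^'n^'n) set"
  assumes H_cont: "continuous_on UNIV H"
    and H_sa: "\<And>t. self_adjoint (H t)"
    and U_unitary: "\<And>t s. unitary (U t s)"
    and U_id: "\<And>t. U t t = mat 1"
    and U_comp: "\<And>t r s. U t r ** U r s = U t s"
    and U_deriv: "\<And>t s. ((\<lambda>t. U t s) has_vector_derivative cmscale (- \<i>) (H t ** U t s)) (at t)"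
    and X0_def: "X0 = (\<Sum>j<n. cmscale (complex_of_real (lam j)) (E j))"
    and lam_distinct: "inj_on lam {..<n}"
    and E_proj: "\<And>j. j < n \<Longrightarrow> self_adjoint (E j) \<and> E j ** E j = E j \<and> E j \<noteq> 0"
    and E_orth: "\<And>j l. j < n \<Longrightarrow> l < n \<Longrightarrow> j \<noteq> l \<Longrightarrow> E j ** E l = 0"
    and E_sum: "(\<Sum>j<n. E j) = mat 1"
    and T_pos: "T > 0"
    and E_cyclic: "\<And>j. j < n \<Longrightarrow> U 0 T ** E j ** U T 0 = E j"
    and psi_onb: "\<And>j. j < n \<Longrightarrow> onb_of (op_range (E j)) (psi j) (d j)"
    and psit_def: "\<And>j k t. psit j k t = U 0 t *v psi j k"
    and Hsub_def: "\<And>j t. Hsub j t = op_range (U 0 t ** E j ** U t 0)"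
    and C_def: "\<And>j t m k. C j t m k = cinner (psi j m) (H t *v psi j k)"
    and Vt_ode: "\<And>j t m k. j < n \<Longrightarrow> m < d j \<Longrightarrow> k < d j \<Longrightarrow>
        ((\<lambda>s. Vt j s m k) has_vector_derivative
           (- \<i>) * (\<Sum>l<d j. C j t m l * Vt j t l k)) (at t)"
    and Vt_init: "\<And>j m k. j < n \<Longrightarrow> m < d j \<Longrightarrow> k < d j \<Longrightarrow>
        Vt j 0 m k = (if m = k then 1 else 0)"
    and psitil_def: "\<And>j k t. psitil j k t = (\<Sum>m<d j. Vt j t m k *s psit j m t)"
    and psibar_onb: "\<And>j t. j < n \<Longrightarrow> t \<in> {0..T} \<Longrightarrow>
        onb_of (Hsub j t) (\<lambda>k. psibar j k t) (d j)"
    and psibar_C1: "\<And>j k. j < n \<Longrightarrow> k < d j \<Longrightarrow>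
        \<exists>D. (\<forall>t\<in>{0..T}. ((\<lambda>s. psibar j k s) has_vector_derivative D t) (at t within {0..T}))
            \<and> continuous_on {0..T} D"
    and psibar_T: "\<And>j k. j < n \<Longrightarrow> k < d j \<Longrightarrow> psibar j k T = psi j k"
    and psibar_0: "\<And>j k. j < n \<Longrightarrow> k < d j \<Longrightarrow> psibar j k 0 = psi j k"
    and Util_def: "\<And>t. Util t = (\<Sum>j<n. \<Sum>k<d j. ketbra (psitil j k t) (psi j k))"
    and Ubar_def: "\<And>t. Ubar t = (\<Sum>j<n. \<Sum>k<d j. ketbra (psibar j k t) (psi j k))"
    and W_def: "\<And>t. W t = Pi_quot n d psi (Ubar t)"
  shows "\<exists>D. continuous_on {0..T} D \<and>
           (\<forall>t\<in>{0..T}. unitary (Util t)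
              \<and> (Util has_vector_derivative D t) (at t within {0..T})
              \<and> Pi_quot n d psi (Util t) = W t
              \<and> can_conn n d psi (Util t) (D t) = 0)"
proof -
  interpret parallel_transport n d psi E H U Vt
    using E_proj E_orth E_sum psi_onb H_sa U_unitary U_id U_comp U_deriv H_cont Vt_ode Vt_init
    by unfold_locales (simp_all add: C_def)
  have Util_lift: "Util = lift"
    by (simp add: fun_eq_iff Util_def lift_eq_basis_map basis_map_def psitil_def psit_def)
  have Ubar_factor: "\<exists>g\<in>blockG n d psi. Ubar t = U 0 t ** g" if "t \<in> {0..T}" for t
  proof -
    have "Ubar t = basis_map (\<lambda>j k. psibar j k t)"
      by (simp add: Ubar_def basis_map_def)
    then show ?thesis
      using psibar_onb[OF _ that] U_unitary
      by (simp add: basis_map_conj_factor onb_of_def Hsub_def adj_U)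
  qed
  show ?thesis
  proof (intro exI[of _ lift_velocity] conjI ballI)
    fix t assume "t \<in> {0..T}"
    then obtain g where "g \<in> blockG n d psi" "Ubar t = U 0 t ** g"
      using Ubar_factor by blast
    then show "Pi_quot n d psi (Util t) = W t"
      by (simp add: Util_lift W_def Pi_quot_lift)
  qed (simp_all add: Util_lift lift_unitary continuous_on_lift_velocity can_conn_lift
      has_vector_derivative_at_within[OF lift_has_derivative])
qed

end
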